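(* For every integer $n\geq 1$, $$c_n(231,2143 : 231)=c_n(312,2143 : 312)=\begin{cases}\frac{4k^3+3k^2-k}{6}+1 & \text{if } n=2k,\\ \frac{4k^3+9k^2+5k}{6}+1 & \text{if } n=2k+1.\end{cases}$$
   Context: $S_n$ is the symmetric group on $[n]=\{1,\dots,n\}$, and a permutation $\pi\in S_n$ is written in one-line notation $\pi=\pi_1\pi_2\cdots\pi_n$ with $\pi_i=\pi(i)$. For $\tau\in S_k$, $k\le n$, $\pi$ contains $\tau$ if there are indices $i_1<\dots<i_k$ with $\pi_{i_s}>\pi_{i_t}$ iff $\tau_s>\tau_t$ for all $1\le s<t\le k$; otherwise $\pi$ avoids $\tau$. $\pi^2$ denotes the composition $\pi\circ\pi$. For patterns $\sigma_1,\sigma_2,\rho$, $c_n(\sigma_1,\sigma_2 : \rho)$ denotes the number of permutations $\pi\in S_n$ such that $\pi$ avoids both $\sigma_1$ and $\sigma_2$ and $\pi^2$ avoids $\rho$. *)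

theory Defs
  imports "HOL-Combinatorics.Permutations" Complex_Main
begin

text \<open>Permutations of [n] = {1..n} are functions nat => nat with pi permutes {1..n}.
  A pattern tau in S_k is given in one-line notation as a list [tau_1,...,tau_k].\<close>

definition contains :: "nat \<Rightarrow> (nat \<Rightarrow> nat) \<Rightarrow> nat list \<Rightarrow> bool" where
  "contains n \<pi> \<tau> \<longleftrightarrow> length \<tau> \<le> n \<and>
     (\<exists>idx :: nat \<Rightarrow> nat.
        (\<forall>s \<in> {1..length \<tau>}. idx s \<in> {1..n}) \<and>
        (\<forall>s \<in> {1..length \<tau>}. \<forall>t \<in> {1..length \<tau>}. s < t \<longrightarrow> idx s < idx t) \<and>
        (\<forall>s \<in> {1..length \<tau>}. \<forall>t \<in> {1..length \<tau>}. s < t \<longrightarrow>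
            (\<pi> (idx s) > \<pi> (idx t) \<longleftrightarrow> \<tau> ! (s - 1) > \<tau> ! (t - 1))))"

definition avoids :: "nat \<Rightarrow> (nat \<Rightarrow> nat) \<Rightarrow> nat list \<Rightarrow> bool" where
  "avoids n \<pi> \<tau> \<longleftrightarrow> \<not> contains n \<pi> \<tau>"

definition c_count :: "nat \<Rightarrow> nat list \<Rightarrow> nat list \<Rightarrow> nat list \<Rightarrow> nat" where
  "c_count n \<sigma>1 \<sigma>2 \<rho> = card {\<pi>. \<pi> permutes {1..n} \<and> avoids n \<pi> \<sigma>1 \<and> avoids n \<pi> \<sigma>2
                                   \<and> avoids n (\<pi> \<circ> \<pi>) \<rho>}"

end

theory Submission
  imports Defs
begin

(*
  Let pi avoid 231 and 2143 with pi^2 avoiding 231, and pi <> id. Let s be the first point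
  moved, v = pi s and p = pi^-1 s. Avoiding 231 makes [s, v] an invariant block and forces
  pi to decrease on [s, p); avoiding 2143 makes pi the identity above v. Avoiding 231 in
  pi^2 then pins everything down: on [s, v] the one-line notation of pi is the "valley"
  v, v-1, ..., v+s-p+1, s, s+1, ..., v+s-p, whose increasing run is no longer than its
  decreasing run (v + s < 2p). Conversely every valley qualifies, so c_n is one more than
  the number of such triples (s, p, v). Inversion exchanges 231 and 312 and preserves
  2143, which transfers the count to (312, 2143 : 312).
*)

section \<open>Strictly monotone maps on intervals of naturals\<close>

lemma strict_mono_on_gap:
  fixes f :: "nat \<Rightarrow> nat"
  assumes "strict_mono_on A f" "{x..y} \<subseteq> A" "x \<le> y"
  shows "f x + (y - x) \<le> f y"
  using assms(2,3)
proof (induction y)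
  case (Suc y)
  show ?case
  proof (cases "x = Suc y")
    case False
    with Suc.prems have "x \<le> y" "{x..y} \<subseteq> A" by auto
    with Suc.IH have "f x + (y - x) \<le> f y" by blast
    moreover have "f y < f (Suc y)"
      using monotone_onD[OF assms(1), of y "Suc y"] Suc.prems \<open>x \<le> y\<close> by (auto simp: subset_iff)
    ultimately show ?thesis using \<open>x \<le> y\<close> by linarith
  qed simp
qed simp

lemma strict_antimono_on_gap:
  fixes f :: "nat \<Rightarrow> nat"
  assumes "strict_antimono_on A f" "{x..y} \<subseteq> A" "x \<le> y"
  shows "f y + (y - x) \<le> f x"
  using assms(2,3)
proof (induction y)
  case (Suc y)
  show ?case
  proof (cases "x = Suc y")
    case False
    with Suc.prems have "x \<le> y" "{x..y} \<subseteq> A" by auto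
    with Suc.IH have "f y + (y - x) \<le> f x" by blast
    moreover have "f (Suc y) < f y"
      using monotone_onD[OF assms(1), of y "Suc y"] Suc.prems \<open>x \<le> y\<close> by (auto simp: subset_iff)
    ultimately show ?thesis using \<open>x \<le> y\<close> by linarith
  qed simp
qed simp

lemma strict_mono_on_self_map_fixed:
  fixes f :: "nat \<Rightarrow> nat"
  assumes "strict_mono_on {a..b} f" "f ` {a..b} \<subseteq> {a..b}" "x \<in> {a..b}"
  shows "f x = x"
proof -
  have "f a + (x - a) \<le> f x" "f x + (b - x) \<le> f b"
    using strict_mono_on_gap[OF assms(1)] assms(3) by auto
  moreover have "f a \<in> {a..b}" "f b \<in> {a..b}"
    using assms(2,3) unfolding image_subset_iff by auto
  ultimately show ?thesis using assms(3) by auto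
qed

section \<open>The patterns 231, 312 and 2143\<close>

definition has_231 :: "nat \<Rightarrow> (nat \<Rightarrow> nat) \<Rightarrow> bool" where
  "has_231 n f \<longleftrightarrow> (\<exists>i j k. 1 \<le> i \<and> i < j \<and> j < k \<and> k \<le> n \<and> f k < f i \<and> f i < f j)"

definition has_312 :: "nat \<Rightarrow> (nat \<Rightarrow> nat) \<Rightarrow> bool" where
  "has_312 n f \<longleftrightarrow> (\<exists>i j k. 1 \<le> i \<and> i < j \<and> j < k \<and> k \<le> n \<and> f j < f k \<and> f k < f i)"

definition has_2143 :: "nat \<Rightarrow> (nat \<Rightarrow> nat) \<Rightarrow> bool" where
  "has_2143 n f \<longleftrightarrow> (\<exists>i j k l. 1 \<le> i \<and> i < j \<and> j < k \<and> k < l \<and> l \<le> n \<and>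
     f j < f i \<and> f i < f l \<and> f l < f k)"

lemma contains_length3:
  "contains n f [a, b, c] \<longleftrightarrow>
     (\<exists>i j k. 1 \<le> i \<and> i < j \<and> j < k \<and> k \<le> n \<and>
        (f j < f i \<longleftrightarrow> b < a) \<and> (f k < f i \<longleftrightarrow> c < a) \<and> (f k < f j \<longleftrightarrow> c < b))"
    (is "?lhs \<longleftrightarrow> ?rhs")
proof -
  have three: "{1..length [a, b, c]} = {1, 2, 3}" by auto
  show ?thesis
  proof
    assume ?lhs
    then obtain idx where "\<forall>s \<in> {1, 2, 3}. idx s \<in> {1..n}"
      "\<forall>s \<in> {1, 2, 3}. \<forall>t \<in> {1, 2, 3}. s < t \<longrightarrow> idx s < idx t"
      "\<forall>s \<in> {1, 2, 3}. \<forall>t \<in> {1, 2, 3}. s < t \<longrightarrow>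
         (f (idx t) < f (idx s) \<longleftrightarrow> [a, b, c] ! (t - 1) < [a, b, c] ! (s - 1))"
      unfolding contains_def three by blast
    then show ?rhs
      by (intro exI[of _ "idx 1"] exI[of _ "idx 2"] exI[of _ "idx 3"]) simp
  next
    assume ?rhs
    then obtain i j k where "1 \<le> i" "i < j" "j < k" "k \<le> n"
      "f j < f i \<longleftrightarrow> b < a" "f k < f i \<longleftrightarrow> c < a" "f k < f j \<longleftrightarrow> c < b"
      by blast
    then show ?lhs
      unfolding contains_def three
      by (intro conjI exI[of _ "\<lambda>t. [i, j, k] ! (t - 1)"]) simp_all
  qed
qed

lemma contains_length4:
  "contains n f [a, b, c, d] \<longleftrightarrow>
     (\<exists>i j k l. 1 \<le> i \<and> i < j \<and> j < k \<and> k < l \<and> l \<le> n \<and>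
        (f j < f i \<longleftrightarrow> b < a) \<and> (f k < f i \<longleftrightarrow> c < a) \<and> (f l < f i \<longleftrightarrow> d < a) \<and>
        (f k < f j \<longleftrightarrow> c < b) \<and> (f l < f j \<longleftrightarrow> d < b) \<and> (f l < f k \<longleftrightarrow> d < c))"
    (is "?lhs \<longleftrightarrow> ?rhs")
proof -
  have four: "{1..length [a, b, c, d]} = {1, 2, 3, 4}" by auto
  show ?thesis
  proof
    assume ?lhs
    then obtain idx where "\<forall>s \<in> {1, 2, 3, 4}. idx s \<in> {1..n}"
      "\<forall>s \<in> {1, 2, 3, 4}. \<forall>t \<in> {1, 2, 3, 4}. s < t \<longrightarrow> idx s < idx t"
      "\<forall>s \<in> {1, 2, 3, 4}. \<forall>t \<in> {1, 2, 3, 4}. s < t \<longrightarrow>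
         (f (idx t) < f (idx s) \<longleftrightarrow> [a, b, c, d] ! (t - 1) < [a, b, c, d] ! (s - 1))"
      unfolding contains_def four by blast
    then show ?rhs
      by (intro exI[of _ "idx 1"] exI[of _ "idx 2"] exI[of _ "idx 3"] exI[of _ "idx 4"]) simp
  next
    assume ?rhs
    then obtain i j k l where "1 \<le> i" "i < j" "j < k" "k < l" "l \<le> n"
      "f j < f i \<longleftrightarrow> b < a" "f k < f i \<longleftrightarrow> c < a" "f l < f i \<longleftrightarrow> d < a"
      "f k < f j \<longleftrightarrow> c < b" "f l < f j \<longleftrightarrow> d < b" "f l < f k \<longleftrightarrow> d < c"
      by blast
    then show ?lhs
      unfolding contains_def four
      by (intro conjI exI[of _ "\<lambda>t. [i, j, k, l] ! (t - 1)"]) simp_all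
  qed
qed

lemma avoids_231_iff:
  assumes "inj f" shows "avoids n f [2, 3, 1] \<longleftrightarrow> \<not> has_231 n f"
  unfolding avoids_def contains_length3 has_231_def
proof (intro arg_cong[where f = Not] ex_cong1)
  fix i j k
  show "(1 \<le> i \<and> i < j \<and> j < k \<and> k \<le> n \<and>
      (f j < f i \<longleftrightarrow> 3 < (2::nat)) \<and> (f k < f i \<longleftrightarrow> 1 < (2::nat)) \<and> (f k < f j \<longleftrightarrow> 1 < (3::nat))) \<longleftrightarrow>
      (1 \<le> i \<and> i < j \<and> j < k \<and> k \<le> n \<and> f k < f i \<and> f i < f j)"
    using inj_eq[OF assms, of i j] by auto
qed

lemma avoids_312_iff:
  assumes "inj f" shows "avoids n f [3, 1, 2] \<longleftrightarrow> \<not> has_312 n f"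
  unfolding avoids_def contains_length3 has_312_def
proof (intro arg_cong[where f = Not] ex_cong1)
  fix i j k
  show "(1 \<le> i \<and> i < j \<and> j < k \<and> k \<le> n \<and>
      (f j < f i \<longleftrightarrow> 1 < (3::nat)) \<and> (f k < f i \<longleftrightarrow> 2 < (3::nat)) \<and> (f k < f j \<longleftrightarrow> 2 < (1::nat))) \<longleftrightarrow>
      (1 \<le> i \<and> i < j \<and> j < k \<and> k \<le> n \<and> f j < f k \<and> f k < f i)"
    using inj_eq[OF assms, of j k] by auto
qed

lemma avoids_2143_iff:
  assumes "inj f" shows "avoids n f [2, 1, 4, 3] \<longleftrightarrow> \<not> has_2143 n f"
  unfolding avoids_def contains_length4 has_2143_def
proof (intro arg_cong[where f = Not] ex_cong1)
  fix i j k l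
  show "(1 \<le> i \<and> i < j \<and> j < k \<and> k < l \<and> l \<le> n \<and>
      (f j < f i \<longleftrightarrow> 1 < (2::nat)) \<and> (f k < f i \<longleftrightarrow> 4 < (2::nat)) \<and> (f l < f i \<longleftrightarrow> 3 < (2::nat)) \<and>
      (f k < f j \<longleftrightarrow> 4 < (1::nat)) \<and> (f l < f j \<longleftrightarrow> 3 < (1::nat)) \<and> (f l < f k \<longleftrightarrow> 3 < (4::nat))) \<longleftrightarrow>
      (1 \<le> i \<and> i < j \<and> j < k \<and> k < l \<and> l \<le> n \<and> f j < f i \<and> f i < f l \<and> f l < f k)"
    using inj_eq[OF assms, of i l] by auto
qed

lemma has_312_inv_if_has_231:
  assumes "\<pi> permutes {1..n}" "has_231 n \<pi>"
  shows "has_312 n (inv \<pi>)"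
proof -
  obtain i j k where ijk: "1 \<le> i" "i < j" "j < k" "k \<le> n" "\<pi> k < \<pi> i" "\<pi> i < \<pi> j"
    using assms(2) unfolding has_231_def by blast
  have "\<pi> x \<in> {1..n}" if "x \<in> {1..n}" for x
    using permutes_in_image[OF assms(1)] that by blast
  then have "1 \<le> \<pi> k" "\<pi> j \<le> n" using ijk by auto
  then show ?thesis
    unfolding has_312_def using ijk permutes_inverses(2)[OF assms(1)]
    by (intro exI[of _ "\<pi> k"] exI[of _ "\<pi> i"] exI[of _ "\<pi> j"]) simp
qed

lemma has_231_inv_if_has_312:
  assumes "\<pi> permutes {1..n}" "has_312 n \<pi>"
  shows "has_231 n (inv \<pi>)"
proof -
  obtain i j k where ijk: "1 \<le> i" "i < j" "j < k" "k \<le> n" "\<pi> j < \<pi> k" "\<pi> k < \<pi> i"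
    using assms(2) unfolding has_312_def by blast
  have "\<pi> x \<in> {1..n}" if "x \<in> {1..n}" for x
    using permutes_in_image[OF assms(1)] that by blast
  then have "1 \<le> \<pi> j" "\<pi> i \<le> n" using ijk by auto
  then show ?thesis
    unfolding has_231_def using ijk permutes_inverses(2)[OF assms(1)]
    by (intro exI[of _ "\<pi> j"] exI[of _ "\<pi> k"] exI[of _ "\<pi> i"]) simp
qed

lemma has_2143_inv_if_has_2143:
  assumes "\<pi> permutes {1..n}" "has_2143 n \<pi>"
  shows "has_2143 n (inv \<pi>)"
proof -
  obtain i j k l where ijkl: "1 \<le> i" "i < j" "j < k" "k < l" "l \<le> n"
    "\<pi> j < \<pi> i" "\<pi> i < \<pi> l" "\<pi> l < \<pi> k"
    using assms(2) unfolding has_2143_def by blast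
  have "\<pi> x \<in> {1..n}" if "x \<in> {1..n}" for x
    using permutes_in_image[OF assms(1)] that by blast
  then have "1 \<le> \<pi> j" "\<pi> k \<le> n" using ijkl by auto
  then show ?thesis
    unfolding has_2143_def using ijkl permutes_inverses(2)[OF assms(1)]
    by (intro exI[of _ "\<pi> j"] exI[of _ "\<pi> i"] exI[of _ "\<pi> l"] exI[of _ "\<pi> k"]) simp
qed

lemma has_231_inv_iff:
  assumes "\<pi> permutes {1..n}"
  shows "has_231 n (inv \<pi>) \<longleftrightarrow> has_312 n \<pi>"
  using has_231_inv_if_has_312[OF assms] has_312_inv_if_has_231[OF permutes_inv[OF assms]]
  by (auto simp: permutes_inv_inv[OF assms])

lemma has_2143_inv_iff:
  assumes "\<pi> permutes {1..n}"
  shows "has_2143 n (inv \<pi>) \<longleftrightarrow> has_2143 n \<pi>"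
  using has_2143_inv_if_has_2143[OF assms] has_2143_inv_if_has_2143[OF permutes_inv[OF assms]]
  by (auto simp: permutes_inv_inv[OF assms])

definition C231 :: "nat \<Rightarrow> (nat \<Rightarrow> nat) set" where
  "C231 n = {\<pi>. \<pi> permutes {1..n} \<and> \<not> has_231 n \<pi> \<and> \<not> has_2143 n \<pi> \<and> \<not> has_231 n (\<pi> \<circ> \<pi>)}"

definition C312 :: "nat \<Rightarrow> (nat \<Rightarrow> nat) set" where
  "C312 n = {\<pi>. \<pi> permutes {1..n} \<and> \<not> has_312 n \<pi> \<and> \<not> has_2143 n \<pi> \<and> \<not> has_312 n (\<pi> \<circ> \<pi>)}"

lemma c_count_eq_card_C231: "c_count n [2, 3, 1] [2, 1, 4, 3] [2, 3, 1] = card (C231 n)"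
  unfolding c_count_def C231_def
  by (intro arg_cong[where f = card] Collect_cong)
     (metis avoids_231_iff avoids_2143_iff permutes_compose permutes_inj)

lemma c_count_eq_card_C312: "c_count n [3, 1, 2] [2, 1, 4, 3] [3, 1, 2] = card (C312 n)"
  unfolding c_count_def C312_def
  by (intro arg_cong[where f = card] Collect_cong)
     (metis avoids_312_iff avoids_2143_iff permutes_compose permutes_inj)

lemma inv_in_C231_iff:
  assumes "\<sigma> permutes {1..n}"
  shows "inv \<sigma> \<in> C231 n \<longleftrightarrow> \<sigma> \<in> C312 n"
proof -
  have "inv \<sigma> \<circ> inv \<sigma> = inv (\<sigma> \<circ> \<sigma>)"
    using o_inv_distrib permutes_bij[OF assms] by metis
  then show ?thesis
    unfolding C231_def C312_def
    using assms permutes_inv[OF assms] has_231_inv_iff[OF assms] has_2143_inv_iff[OF assms]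
      has_231_inv_iff[OF permutes_compose[OF assms assms]]
    by simp
qed

lemma C312_eq_inv_image: "C312 n = inv ` C231 n"
proof
  show "C312 n \<subseteq> inv ` C231 n"
  proof
    fix \<sigma> assume "\<sigma> \<in> C312 n"
    then have "\<sigma> permutes {1..n}" unfolding C312_def by blast
    with \<open>\<sigma> \<in> C312 n\<close> show "\<sigma> \<in> inv ` C231 n"
      using inv_in_C231_iff permutes_inv_inv by (metis image_eqI)
  qed
  show "inv ` C231 n \<subseteq> C312 n"
  proof
    fix \<sigma> assume "\<sigma> \<in> inv ` C231 n"
    then obtain \<pi> where "\<pi> \<in> C231 n" "\<sigma> = inv \<pi>" by blast
    moreover have "\<pi> permutes {1..n}" using \<open>\<pi> \<in> C231 n\<close> unfolding C231_def by blast
    ultimately show "\<sigma> \<in> C312 n"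
      using inv_in_C231_iff[OF permutes_inv] permutes_inv_inv by metis
  qed
qed

lemma card_C312: "card (C312 n) = card (C231 n)"
proof -
  have "inj_on inv (C231 n)"
    by (rule inj_on_inverseI[where g = inv]) (auto simp: C231_def permutes_inv_inv)
  then show ?thesis unfolding C312_eq_inv_image by (rule card_image)
qed

section \<open>Valley permutations\<close>

fun valley :: "nat \<times> nat \<times> nat \<Rightarrow> nat \<Rightarrow> nat" where
  "valley (s, p, v) x =
     (if x < s then x else if x < p then v + s - x else if x \<le> v then x + s - p else x)"

definition valley_params :: "nat \<Rightarrow> (nat \<times> nat \<times> nat) set" where
  "valley_params n = {(s, p, v). 1 \<le> s \<and> s < p \<and> p \<le> v \<and> v \<le> n \<and> v + s < 2 * p}"

lemma valley_valley:
  assumes "(s, p, v) \<in> valley_params n"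
  shows "valley (s, p, v) (valley (s, p, v) x) =
    (if x < s then x else if x \<le> v + s - p then 2 * s + v - p - x else if x < p then x
     else if x \<le> v then v + p - x else x)"
  using assms unfolding valley_params_def by auto

lemma valley_permutes:
  assumes "(s, p, v) \<in> valley_params n"
  shows "valley (s, p, v) permutes {1..n}"
proof (rule bij_imp_permutes)
  have "inj_on (valley (s, p, v)) {1..n}"
    using assms unfolding valley_params_def inj_on_def by auto
  moreover have "valley (s, p, v) ` {1..n} \<subseteq> {1..n}"
    using assms unfolding valley_params_def by auto
  ultimately show "bij_betw (valley (s, p, v)) {1..n} {1..n}"
    unfolding bij_betw_def using endo_inj_surj by blast
  show "valley (s, p, v) x = x" if "x \<notin> {1..n}" for x
    using assms that unfolding valley_params_def by auto
qed

lemma valley_avoids_231: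
  assumes "(s, p, v) \<in> valley_params n"
  shows "\<not> has_231 n (valley (s, p, v))"
  using assms unfolding valley_params_def has_231_def by (auto split: if_splits)

lemma valley_avoids_2143:
  assumes "(s, p, v) \<in> valley_params n"
  shows "\<not> has_2143 n (valley (s, p, v))"
  using assms unfolding valley_params_def has_2143_def by (auto split: if_splits)

lemma valley_square_inversion:
  assumes "(s, p, v) \<in> valley_params n" "x < y"
    and "valley (s, p, v) (valley (s, p, v) y) < valley (s, p, v) (valley (s, p, v) x)"
  shows "s \<le> x \<and> y \<le> v + s - p \<or> p \<le> x \<and> y \<le> v"
  using assms unfolding valley_valley[OF assms(1)] valley_params_def by (auto split: if_splits)

lemma valley_square_decreasing:
  assumes "(s, p, v) \<in> valley_params n" "x < y"
    and "s \<le> x \<and> y \<le> v + s - p \<or> p \<le> x \<and> y \<le> v"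
  shows "valley (s, p, v) (valley (s, p, v) y) < valley (s, p, v) (valley (s, p, v) x)"
  using assms unfolding valley_valley[OF assms(1)] valley_params_def by auto

lemma valley_square_avoids_231:
  assumes "(s, p, v) \<in> valley_params n"
  shows "\<not> has_231 n (valley (s, p, v) \<circ> valley (s, p, v))"
proof
  assume "has_231 n (valley (s, p, v) \<circ> valley (s, p, v))"
  then obtain i j k where "i < j" "j < k"
    "valley (s, p, v) (valley (s, p, v) k) < valley (s, p, v) (valley (s, p, v) i)"
    "valley (s, p, v) (valley (s, p, v) i) < valley (s, p, v) (valley (s, p, v) j)"
    unfolding has_231_def by auto
  with valley_square_inversion[OF assms, of i k] valley_square_decreasing[OF assms, of i j]
  show False by auto
qed

section \<open>Every non-identity member of C231 is a valley\<close>

locale nonid_C231 =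
  fixes n :: nat and \<pi> :: "nat \<Rightarrow> nat"
  assumes permutes: "\<pi> permutes {1..n}"
    and no_231: "\<not> has_231 n \<pi>"
    and no_2143: "\<not> has_2143 n \<pi>"
    and no_231_square: "\<not> has_231 n (\<pi> \<circ> \<pi>)"
    and not_id: "\<pi> \<noteq> id"
begin

lemma inj_perm: "inj \<pi>"
  using permutes_inj[OF permutes] .

lemma in_range: "x \<in> {1..n} \<Longrightarrow> \<pi> x \<in> {1..n}"
  using permutes_in_image[OF permutes] by blast

lemma fixed_outside: "x \<notin> {1..n} \<Longrightarrow> \<pi> x = x"
  using permutes_not_in[OF permutes] .

lemma no_231_at: "\<lbrakk>1 \<le> i; i < j; j < k; k \<le> n; \<pi> k < \<pi> i; \<pi> i < \<pi> j\<rbrakk> \<Longrightarrow> False"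
  using no_231 unfolding has_231_def by blast

lemma no_2143_at:
  "\<lbrakk>1 \<le> i; i < j; j < k; k < l; l \<le> n; \<pi> j < \<pi> i; \<pi> i < \<pi> l; \<pi> l < \<pi> k\<rbrakk> \<Longrightarrow> False"
  using no_2143 unfolding has_2143_def by blast

lemma no_231_square_at:
  "\<lbrakk>1 \<le> i; i < j; j < k; k \<le> n; \<pi> (\<pi> k) < \<pi> (\<pi> i); \<pi> (\<pi> i) < \<pi> (\<pi> j)\<rbrakk> \<Longrightarrow> False"
  using no_231_square unfolding has_231_def by auto

definition s :: nat where "s = (LEAST x. \<pi> x \<noteq> x)"
definition v :: nat where "v = \<pi> s"
definition p :: nat where "p = inv \<pi> s"

lemma fixed_below_s: "x < s \<Longrightarrow> \<pi> x = x"
  unfolding s_def using not_less_Least by blast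

lemma moves_s: "\<pi> s \<noteq> s"
proof -
  have "\<exists>x. \<pi> x \<noteq> x" using not_id by auto
  then show ?thesis unfolding s_def by (rule LeastI_ex)
qed

lemma s_bounds: "1 \<le> s" "s \<le> n"
  using moves_s fixed_outside[of s] by auto

lemma ge_s: "s \<le> x \<Longrightarrow> s \<le> \<pi> x"
  using fixed_below_s[of "\<pi> x"] inj_eq[OF inj_perm, of "\<pi> x" x] by fastforce

lemma s_less_v: "s < v"
  using ge_s[of s] moves_s unfolding v_def by simp

lemma v_le_n: "v \<le> n"
  using in_range[of s] s_bounds unfolding v_def by simp

lemma above_v_after:
  assumes "s < x" "v < \<pi> x" "x < y" "y \<le> n"
  shows "v < \<pi> y"
proof -
  have "\<not> \<pi> y < v" using no_231_at[of s x y] assms s_bounds unfolding v_def by auto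
  moreover have "\<pi> y \<noteq> v" using inj_eq[OF inj_perm, of y s] assms unfolding v_def by auto
  ultimately show ?thesis by simp
qed

text \<open>Otherwise every point after \<open>x\<close> is sent above \<open>v\<close> (a 231 with \<open>s\<close> and \<open>x\<close>),
  so the \<open>v - s\<close> values in \<open>[s, v)\<close> would be taken on the fewer points of \<open>(s, x)\<close>.\<close>

lemma below_v:
  assumes "s < x" "x \<le> v"
  shows "\<pi> x < v"
proof (rule ccontr)
  assume "\<not> \<pi> x < v"
  moreover have "\<pi> x \<noteq> v" using inj_eq[OF inj_perm, of x s] assms unfolding v_def by auto
  ultimately have gt: "v < \<pi> x" by simp
  have "{s..<v} \<subseteq> \<pi> ` {s<..<x}"
  proof
    fix w assume w: "w \<in> {s..<v}"
    define y where "y = inv \<pi> w"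
    have y: "\<pi> y = w" unfolding y_def using permutes_inverses(1)[OF permutes] .
    have "s \<le> y" using fixed_below_s[of y] y w by fastforce
    moreover have "y \<noteq> s" "y \<noteq> x" using y w gt unfolding v_def by auto
    moreover have "\<not> x < y"
      using above_v_after[OF assms(1) gt, of y] fixed_outside[of y] y w v_le_n by force
    ultimately show "w \<in> \<pi> ` {s<..<x}" using y by force
  qed
  then have "card {s..<v} \<le> card {s<..<x}"
    using surj_card_le[of "{s<..<x}"] by blast
  then show False using assms by simp
qed

lemma block_image: "\<pi> ` {s..v} = {s..v}"
proof -
  have "\<pi> ` {s..v} \<subseteq> {s..v}"
    using ge_s below_v s_less_v unfolding v_def by (force simp: le_less)
  then show ?thesis
    using endo_inj_surj[of "{s..v}"] inj_on_subset[OF inj_perm] by blast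
qed

lemma above_v:
  assumes "v < x" "x \<le> n"
  shows "v < \<pi> x"
proof -
  have "\<pi> x \<notin> \<pi> ` {s..v}" using assms inj_eq[OF inj_perm] by auto
  then show ?thesis using block_image ge_s[of x] assms s_less_v by auto
qed

lemma fixed_above_v:
  assumes "v < x"
  shows "\<pi> x = x"
proof (cases "x \<le> n")
  case True
  have "strict_mono_on {Suc v..n} \<pi>"
  proof (rule monotone_onI, rule ccontr)
    fix y z assume yz: "y \<in> {Suc v..n}" "z \<in> {Suc v..n}" "y < z" "\<not> \<pi> y < \<pi> z"
    then have "\<pi> z < \<pi> y" using inj_eq[OF inj_perm, of y z] by (auto simp: neq_iff)
    moreover have "\<pi> (Suc s) < \<pi> s" using below_v[of "Suc s"] s_less_v unfolding v_def by simp
    moreover have "\<pi> s < \<pi> z" using above_v[of z] yz unfolding v_def by simp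
    ultimately show False using no_2143_at[of s "Suc s" y z] yz s_bounds s_less_v by auto
  qed
  moreover have "\<pi> ` {Suc v..n} \<subseteq> {Suc v..n}"
  proof (rule image_subsetI)
    fix y assume "y \<in> {Suc v..n}"
    then show "\<pi> y \<in> {Suc v..n}" using above_v[of y] in_range[of y] by auto
  qed
  ultimately show ?thesis using strict_mono_on_self_map_fixed assms True by auto
qed (simp add: fixed_outside)

lemma p_image: "\<pi> p = s"
  unfolding p_def using permutes_inverses(1)[OF permutes] .

lemma s_less_p: "s < p"
proof -
  have "\<not> p < s" using fixed_below_s[of p] p_image by auto
  moreover have "p \<noteq> s" using p_image moves_s by auto
  ultimately show ?thesis by simp
qed

lemma p_le_v: "p \<le> v"
  using fixed_above_v[of p] p_image s_less_v by (metis not_le less_asym)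

lemma head_decreasing: "strict_antimono_on {s..<p} \<pi>"
proof (rule monotone_onI, rule ccontr)
  fix i j assume ij: "i \<in> {s..<p}" "j \<in> {s..<p}" "i < j" "\<not> \<pi> j < \<pi> i"
  then have "\<pi> i < \<pi> j" using inj_eq[OF inj_perm, of i j] by (auto simp: neq_iff)
  moreover have "\<pi> p < \<pi> i"
    using ge_s[of i] inj_eq[OF inj_perm, of i p] ij p_image by (auto simp: le_less)
  ultimately show False
    using no_231_at[of i j p] ij s_bounds p_le_v v_le_n by auto
qed

lemma block_maps: "x \<in> {s..v} \<Longrightarrow> \<pi> x \<in> {s..v}"
  using imageI[of x "{s..v}" \<pi>] block_image by simp

lemma square_block: "s \<le> x \<Longrightarrow> x \<le> v \<Longrightarrow> \<pi> (\<pi> x) \<in> {s..v}"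
  using block_maps by simp

lemma square_p: "\<pi> (\<pi> p) = v"
  using p_image unfolding v_def by simp

lemma square_inj: "x \<noteq> y \<Longrightarrow> \<pi> (\<pi> x) \<noteq> \<pi> (\<pi> y)"
  using inj_perm by (simp add: inj_eq)

lemma square_head_below_tail:
  assumes "s \<le> i" "i < p" "p < k" "k \<le> v"
  shows "\<pi> (\<pi> i) < \<pi> (\<pi> k)"
proof (rule ccontr)
  assume "\<not> \<pi> (\<pi> i) < \<pi> (\<pi> k)"
  then have "\<pi> (\<pi> k) < \<pi> (\<pi> i)"
    using square_inj[of i k] assms by (auto simp: neq_iff)
  moreover have "\<pi> (\<pi> i) < \<pi> (\<pi> p)"
    using square_block[of i] square_inj[of i p] assms square_p p_le_v by (auto simp: le_less)
  ultimately show False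
    using no_231_square_at[of i p k] assms s_bounds v_le_n by auto
qed

text \<open>Since \<open>\<pi>\<^sup>2\<close> sends \<open>[s, p)\<close> below \<open>(p, v]\<close> and \<open>p\<close> to \<open>v\<close>, counting shows that it maps
  \<open>[s, p)\<close> into itself and \<open>(p, v]\<close> into \<open>[p, v)\<close>.\<close>

lemma square_head:
  assumes "s \<le> i" "i < p"
  shows "\<pi> (\<pi> i) < p"
proof (rule ccontr)
  assume "\<not> \<pi> (\<pi> i) < p"
  moreover have "\<pi> (\<pi> i) \<noteq> v" using square_inj[of i p] square_p assms by auto
  ultimately have i: "\<pi> (\<pi> i) \<in> {p..<v}" using square_block[of i] assms p_le_v by auto
  have "\<pi> (\<pi> k) \<in> {p..<v}" if "p < k" "k \<le> v" for k
  proof -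
    have "\<pi> (\<pi> i) < \<pi> (\<pi> k)" using square_head_below_tail assms that .
    moreover have "\<pi> (\<pi> k) \<noteq> v" using square_inj[of k p] square_p that by auto
    moreover have "\<pi> (\<pi> k) \<le> v" using square_block[of k] that s_less_p by auto
    ultimately show ?thesis using i by auto
  qed
  then have "(\<lambda>x. \<pi> (\<pi> x)) ` insert i {p<..v} \<subseteq> {p..<v}" using i by auto
  moreover have "inj_on (\<lambda>x. \<pi> (\<pi> x)) (insert i {p<..v})"
    using square_inj by (meson inj_onI)
  ultimately have "card (insert i {p<..v}) \<le> card {p..<v}"
    using card_inj_on_le[OF _ _ finite_atLeastLessThan] by blast
  then show False using assms by simp
qed

lemma square_tail:
  assumes "p < k" "k \<le> v"
  shows "p \<le> \<pi> (\<pi> k)"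
proof (rule ccontr)
  assume "\<not> p \<le> \<pi> (\<pi> k)"
  then have k: "\<pi> (\<pi> k) \<in> {s..<p}" using square_block[of k] assms s_less_p by auto
  have "\<pi> (\<pi> i) \<in> {s..<p}" if "s \<le> i" "i < p" for i
  proof -
    have "\<pi> (\<pi> i) < \<pi> (\<pi> k)" using square_head_below_tail that assms .
    moreover have "s \<le> \<pi> (\<pi> i)" using square_block[of i] that p_le_v by auto
    ultimately show ?thesis using k by auto
  qed
  then have "(\<lambda>x. \<pi> (\<pi> x)) ` insert k {s..<p} \<subseteq> {s..<p}" using k by auto
  moreover have "inj_on (\<lambda>x. \<pi> (\<pi> x)) (insert k {s..<p})"
    using square_inj by (meson inj_onI)
  ultimately have "card (insert k {s..<p}) \<le> card {s..<p}"
    using card_inj_on_le[OF _ _ finite_atLeastLessThan] by blast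
  then show False using assms by simp
qed

text \<open>The points of \<open>[s, p)\<close> that \<open>\<pi>\<close> keeps in \<open>[s, p)\<close> form a \<open>\<pi>\<close>-invariant set \<open>G\<close>,
  so \<open>\<pi>\<close> is onto \<open>G\<close>; if \<open>\<pi> v\<close> exceeded \<open>\<pi> (p - 1)\<close> it would lie in \<open>G\<close> without a
  preimage there.\<close>

lemma last_tail_below:
  assumes "p < v"
  shows "\<pi> v < \<pi> (p - 1)"
proof (rule ccontr)
  let ?d = "\<pi> (p - 1)" and ?b = "\<pi> v"
  assume "\<not> ?b < ?d"
  moreover have "?b \<noteq> ?d" using inj_eq[OF inj_perm, of v "p - 1"] assms by auto
  ultimately have "?d < ?b" by simp
  have "?b < p" using square_head[of s] s_less_p unfolding v_def by simp
  define G where "G = {y \<in> {s..<p}. \<pi> y < p}"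
  have "\<pi> ` G \<subseteq> G"
  proof (rule image_subsetI)
    fix y assume "y \<in> G"
    then show "\<pi> y \<in> G" using ge_s[of y] square_head[of y] unfolding G_def by auto
  qed
  moreover have "finite G" unfolding G_def by simp
  ultimately have G: "\<pi> ` G = G"
    using endo_inj_surj inj_on_subset[OF inj_perm subset_UNIV] by blast
  have d: "?d \<in> G"
    using ge_s[of "p - 1"] square_head[of "p - 1"] s_less_p \<open>?d < ?b\<close> \<open>?b < p\<close>
    unfolding G_def by auto
  then have "\<pi> ?b < \<pi> ?d"
    using monotone_onD[OF head_decreasing, of ?d ?b] \<open>?d < ?b\<close> \<open>?b < p\<close> unfolding G_def by auto
  then have "?b \<in> G"
    using d \<open>?d < ?b\<close> \<open>?b < p\<close> unfolding G_def by auto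
  then have "?b \<in> \<pi> ` G" using G by simp
  then obtain y where "\<pi> v = \<pi> y" "y \<in> G" by (rule imageE)
  then show False
    using inj_eq[OF inj_perm, of y v] p_le_v unfolding G_def by auto
qed

lemma tail_below_head:
  assumes "p \<le> t" "t \<le> v"
  shows "\<pi> t \<in> {s..<\<pi> (p - 1)}"
proof -
  have "\<pi> t < \<pi> (p - 1)"
  proof -
    consider "t = p" | "p < t" "t < v" | "p < t" "t = v" using assms by linarith
    then show ?thesis
    proof cases
      case 1
      then show ?thesis
        using ge_s[of "p - 1"] inj_eq[OF inj_perm, of "p - 1" p] s_less_p p_image by fastforce
    next
      case 2
      show ?thesis
      proof (rule ccontr)
        assume "\<not> \<pi> t < \<pi> (p - 1)"
        then have "\<pi> (p - 1) < \<pi> t" using inj_eq[OF inj_perm, of t "p - 1"] 2 by (auto simp: neq_iff)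
        moreover have "1 \<le> p - 1" "p - 1 < t" using 2 s_less_p s_bounds by auto
        ultimately show False
          using no_231_at[of "p - 1" t v] last_tail_below 2 v_le_n by auto
      qed
    next
      case 3
      then show ?thesis using last_tail_below by simp
    qed
  qed
  then show ?thesis using ge_s[of t] assms s_less_p by auto
qed

lemma head_values:
  assumes "s \<le> x" "x < p"
  shows "\<pi> x = v + s - x"
proof -
  have "\<pi> ` {p..v} \<subseteq> {s..<\<pi> (p - 1)}"
    using tail_below_head by (simp add: image_subset_iff)
  then have "card {p..v} \<le> card {s..<\<pi> (p - 1)}"
    using card_inj_on_le[OF inj_on_subset[OF inj_perm] _ finite_atLeastLessThan] by blast
  then have "v + 1 - p \<le> \<pi> (p - 1) - s" by simp
  moreover have "\<pi> x + (x - s) \<le> v"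
    using strict_antimono_on_gap[OF head_decreasing _ assms(1), unfolded v_def[symmetric]] assms
    by (simp add: subset_iff)
  moreover have "{x..p - 1} \<subseteq> {s..<p}" "x \<le> p - 1"
    using assms by (auto simp: subset_iff)
  then have "\<pi> (p - 1) + (p - 1 - x) \<le> \<pi> x"
    by (rule strict_antimono_on_gap[OF head_decreasing])
  ultimately show ?thesis using assms p_le_v by linarith
qed

lemma v_plus_s_less_2p: "v + s < 2 * p"
proof (rule ccontr)
  assume "\<not> v + s < 2 * p"
  define k where "k = inv \<pi> p"
  have k: "\<pi> k = p" unfolding k_def using permutes_inverses(1)[OF permutes] .
  have "\<not> k < s" using fixed_below_s[of k] k s_less_p by auto
  moreover have "\<not> (s \<le> k \<and> k < p)" using head_values[of k] k \<open>\<not> v + s < 2 * p\<close> by auto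
  moreover have "\<not> v < k" using fixed_above_v[of k] k p_le_v by auto
  moreover have "k \<noteq> p" using k p_image s_less_p by auto
  ultimately have "p < k" "k \<le> v" by auto
  then show False using square_tail k p_image s_less_p by fastforce
qed

text \<open>Reflecting an inversion \<open>y < z\<close> of the tail through the head: the squares at
  \<open>v + s - z < v + s - y < v + s - p\<close> are \<open>\<pi> z\<close>, \<open>\<pi> y\<close>, \<open>s\<close>, a 231 in \<open>\<pi>\<^sup>2\<close>.\<close>

lemma tail_increasing: "strict_mono_on {p..v} \<pi>"
proof (rule monotone_onI, rule ccontr)
  fix y z assume yz: "y \<in> {p..v}" "z \<in> {p..v}" "y < z" "\<not> \<pi> y < \<pi> z"
  then have "\<pi> z < \<pi> y" using inj_eq[OF inj_perm, of y z] by (auto simp: neq_iff)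
  moreover have "s < \<pi> z"
    using tail_below_head[of z] inj_eq[OF inj_perm, of z p] p_image yz by fastforce
  ultimately have "p < y" using yz p_image by (cases "y = p") auto
  have square_head_image: "\<pi> (\<pi> (v + s - x)) = \<pi> x" if "x \<in> {p..v}" for x
    using head_values[of "v + s - x"] that v_plus_s_less_2p by auto
  have "1 \<le> v + s - z" "v + s - z < v + s - y" "v + s - y < v + s - p" "v + s - p \<le> n"
    using yz \<open>p < y\<close> s_bounds s_less_p v_le_n by auto
  moreover have "\<pi> (\<pi> (v + s - p)) < \<pi> (\<pi> (v + s - z))"
    using square_head_image[of p] square_head_image[of z] \<open>s < \<pi> z\<close> p_image yz p_le_v by simp
  moreover have "\<pi> (\<pi> (v + s - z)) < \<pi> (\<pi> (v + s - y))"
    using square_head_image[of y] square_head_image[of z] \<open>\<pi> z < \<pi> y\<close> yz by simp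
  ultimately show False by (rule no_231_square_at)
qed

lemma tail_values:
  assumes "p \<le> t" "t \<le> v"
  shows "\<pi> t = t + s - p"
proof -
  have "\<pi> p + (t - p) \<le> \<pi> t" "\<pi> t + (v - t) \<le> \<pi> v"
    using strict_mono_on_gap[OF tail_increasing] assms by auto
  moreover have "\<pi> v < \<pi> (p - 1)" using tail_below_head[of v] p_le_v by simp
  moreover have "\<pi> (p - 1) = v + s - (p - 1)" using head_values[of "p - 1"] s_less_p by simp
  ultimately show ?thesis using assms p_image s_less_p p_le_v by linarith
qed

lemma params_in_valley_params: "(s, p, v) \<in> valley_params n"
  unfolding valley_params_def using s_bounds s_less_p p_le_v v_le_n v_plus_s_less_2p by simp

lemma eq_valley: "\<pi> = valley (s, p, v)"
proof
  fix x show "\<pi> x = valley (s, p, v) x"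
    using fixed_below_s[of x] head_values[of x] tail_values[of x] fixed_above_v[of x] by auto
qed

end

lemma C231_eq: "C231 n = insert id (valley ` valley_params n)"
proof
  show "C231 n \<subseteq> insert id (valley ` valley_params n)"
  proof
    fix \<pi> assume "\<pi> \<in> C231 n"
    show "\<pi> \<in> insert id (valley ` valley_params n)"
    proof (cases "\<pi> = id")
      case False
      with \<open>\<pi> \<in> C231 n\<close> interpret nonid_C231 n \<pi>
        by unfold_locales (auto simp: C231_def)
      show ?thesis using eq_valley params_in_valley_params by blast
    qed simp
  qed
  have "id \<in> C231 n"
    unfolding C231_def has_231_def has_2143_def by (simp add: permutes_id)
  moreover have "valley t \<in> C231 n" if "t \<in> valley_params n" for t
    using that valley_permutes valley_avoids_231 valley_avoids_2143 valley_square_avoids_231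
    unfolding C231_def by (cases t) auto
  ultimately show "insert id (valley ` valley_params n) \<subseteq> C231 n" by blast
qed

lemma inj_on_valley: "inj_on valley (valley_params n)"
proof (rule inj_onI)
  fix t t' assume t: "t \<in> valley_params n" "t' \<in> valley_params n" "valley t = valley t'"
  obtain s p v s' p' v' where st: "t = (s, p, v)" "t' = (s', p', v')"
    by (cases t, cases t') auto
  with t have params: "(s, p, v) \<in> valley_params n" "(s', p', v') \<in> valley_params n"
    and "valley (s, p, v) = valley (s', p', v')" by auto
  then have eq: "valley (s, p, v) x = valley (s', p', v') x" for x by simp
  have "s = s'"
  proof (rule ccontr)
    assume "s \<noteq> s'"
    then consider "s < s'" | "s' < s" by linarith
    then show False
      using eq[of s] eq[of s'] params unfolding valley_params_def by cases auto
  qed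
  moreover from this have "v = v'"
    using eq[of s] params unfolding valley_params_def by auto
  moreover have "p = p'"
  proof (rule ccontr)
    assume "p \<noteq> p'"
    then consider "p < p'" | "p' < p" by linarith
    then show False
      using eq[of p] eq[of p'] params \<open>s = s'\<close> \<open>v = v'\<close> unfolding valley_params_def by cases auto
  qed
  ultimately show "t = t'" using st by simp
qed

lemma id_notin_valley_image: "id \<notin> valley ` valley_params n"
proof
  assume "id \<in> valley ` valley_params n"
  then obtain s p v where params: "(s, p, v) \<in> valley_params n" and "id = valley (s, p, v)"
    by auto
  then have "valley (s, p, v) s = s" by (metis id_apply)
  then show False using params unfolding valley_params_def by auto
qed

section \<open>Counting\<close>

lemma finite_valley_params: "finite (valley_params n)"
  by (rule finite_subset[of _ "{1..n} \<times> {1..n} \<times> {1..n}"]) (auto simp: valley_params_def)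

lemma card_C231: "card (C231 n) = card (valley_params n) + 1"
  unfolding C231_eq
  using card_insert_disjoint[OF finite_imageI[OF finite_valley_params] id_notin_valley_image]
    card_image[OF inj_on_valley] by simp

definition valley_row :: "nat \<Rightarrow> nat" where
  "valley_row v = (\<Sum>p = 1..v. 2 * p - v - 1)"

lemma card_valley_params: "card (valley_params n) = (\<Sum>v = 1..n. valley_row v)"
proof -
  have "valley_params n = (\<lambda>(v, p, s). (s, p, v)) ` (SIGMA v:{1..n}. SIGMA p:{1..v}. {1..<2 * p - v})"
    unfolding valley_params_def by (auto simp: image_iff)
  moreover have "inj (\<lambda>(v, p, s). (s, p, v) :: nat \<times> nat \<times> nat)"
    by (auto simp: inj_def)
  ultimately show ?thesis
    by (simp add: card_image inj_on_subset valley_row_def)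
qed

lemma valley_row_Suc_Suc: "valley_row (Suc (Suc v)) = valley_row v + v + 1"
proof -
  have "valley_row (Suc (Suc v)) = (\<Sum>p = Suc 1..Suc (Suc v). 2 * p - Suc (Suc v) - 1)"
    unfolding valley_row_def by (simp add: sum.atLeast_Suc_atMost)
  also have "\<dots> = (\<Sum>p = 1..Suc v. 2 * p - v - 1)"
    by (simp only: sum.shift_bounds_cl_Suc_ivl) simp
  also have "\<dots> = valley_row v + v + 1"
    unfolding valley_row_def by simp
  finally show ?thesis .
qed

lemma valley_row_closed: "valley_row (2 * k) = k * k" "valley_row (2 * k + 1) = k * k + k"
proof (induction k)
  case 0
  show "valley_row (2 * 0) = 0 * 0" "valley_row (2 * 0 + 1) = 0 * 0 + 0"
    by (simp_all add: valley_row_def)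
next
  case (Suc k)
  show "valley_row (2 * Suc k) = Suc k * Suc k"
    using valley_row_Suc_Suc[of "2 * k"] Suc.IH(1) by simp
  show "valley_row (2 * Suc k + 1) = Suc k * Suc k + Suc k"
    using valley_row_Suc_Suc[of "2 * k + 1"] Suc.IH(2) by simp
qed

lemma card_valley_params_closed:
  "real (card (valley_params (2 * k))) = (4 * real k ^ 3 + 3 * real k ^ 2 - real k) / 6"
  "real (card (valley_params (2 * k + 1))) = (4 * real k ^ 3 + 9 * real k ^ 2 + 5 * real k) / 6"
proof (induction k)
  case 0
  show "real (card (valley_params (2 * 0))) = (4 * real 0 ^ 3 + 3 * real 0 ^ 2 - real 0) / 6"
    "real (card (valley_params (2 * 0 + 1))) = (4 * real 0 ^ 3 + 9 * real 0 ^ 2 + 5 * real 0) / 6"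
    by (simp_all add: card_valley_params valley_row_def)
next
  case (Suc k)
  have even: "card (valley_params (2 * Suc k)) = card (valley_params (2 * k + 1)) + Suc k * Suc k"
    using valley_row_closed(1)[of "Suc k"] by (simp add: card_valley_params)
  have odd: "card (valley_params (2 * Suc k + 1)) = card (valley_params (2 * Suc k)) + Suc k * Suc k + Suc k"
    using valley_row_closed(2)[of "Suc k"] by (simp add: card_valley_params)
  show "real (card (valley_params (2 * Suc k))) =
      (4 * real (Suc k) ^ 3 + 3 * real (Suc k) ^ 2 - real (Suc k)) / 6"
    using Suc.IH(2) unfolding even of_nat_add of_nat_mult
    by (simp add: field_simps power2_eq_square power3_eq_cube)
  then show "real (card (valley_params (2 * Suc k + 1))) =
      (4 * real (Suc k) ^ 3 + 9 * real (Suc k) ^ 2 + 5 * real (Suc k)) / 6"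
    unfolding odd of_nat_add of_nat_mult
    by (simp add: field_simps power2_eq_square power3_eq_cube)
qed

theorem theorem4p4:
  fixes n :: nat
  assumes "n \<ge> 1"
  shows "c_count n [2,3,1] [2,1,4,3] [2,3,1] = c_count n [3,1,2] [2,1,4,3] [3,1,2]
       \<and> (\<forall>k::nat. n = 2 * k \<longrightarrow>
            real (c_count n [2,3,1] [2,1,4,3] [2,3,1])
              = (4 * real k ^ 3 + 3 * real k ^ 2 - real k) / 6 + 1)
       \<and> (\<forall>k::nat. n = 2 * k + 1 \<longrightarrow>
            real (c_count n [2,3,1] [2,1,4,3] [2,3,1])
              = (4 * real k ^ 3 + 9 * real k ^ 2 + 5 * real k) / 6 + 1)"
proof -
  have "c_count n [2,3,1] [2,1,4,3] [2,3,1] = c_count n [3,1,2] [2,1,4,3] [3,1,2]"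
    unfolding c_count_eq_card_C231 c_count_eq_card_C312 card_C312 ..
  moreover have "real (c_count n [2,3,1] [2,1,4,3] [2,3,1]) = real (card (valley_params n)) + 1"
    unfolding c_count_eq_card_C231 card_C231 by simp
  ultimately show ?thesis using card_valley_params_closed by auto
qed

end
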